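(* Let $X$ and $Y$ be nontrivial real Banach spaces. (a) If $X^*$ has the weak$^*$ local diameter $2$ property, then $(X\oplus_1 Y)^*$ has the weak$^*$ local diameter $2$ property. (b) If $X^*$ and $Y^*$ have the weak$^*$ local diameter $2$ property and $1<p\leq\infty$, then $(X\oplus_p Y)^*$ has the weak$^*$ local diameter $2$ property. (c) If $(X\oplus_p Y)^*$ has the weak$^*$ local diameter $2$ property, where $1<p\leq\infty$, then $X^*$ has the weak$^*$ local diameter $2$ property.
   Context: For $1\le p<\infty$, $X\oplus_p Y$ is $X\times Y$ with norm $(\|x\|^p+\|y\|^p)^{1/p}$; $X\oplus_\infty Y$ has norm $\max\{\|x\|,\|y\|\}$. For a Banach space $Z$, a weak$^*$ slice of $B_{Z^*}$ is a set $\{z^*\in B_{Z^*}: z^*(z)>1-\alpha\}$ with $z\in S_Z$, $\alpha>0$; $Z^*$ has the weak$^*$ local diameter $2$ property if every weak$^*$ slice of $B_{Z^*}$ has diameter $2$. *)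

theory Defs
  imports "HOL-Analysis.Analysis"
begin

text \<open>A normed space is represented by a real vector space together with a norm
function N. Its dual consists of the linear functionals bounded w.r.t. N.\<close>

definition bounded_wrt :: "('v::real_vector \<Rightarrow> real) \<Rightarrow> ('v \<Rightarrow> real) \<Rightarrow> bool" where
  "bounded_wrt N f \<longleftrightarrow> linear f \<and> (\<exists>K. \<forall>x. \<bar>f x\<bar> \<le> K * N x)"

definition dual_norm :: "('v::real_vector \<Rightarrow> real) \<Rightarrow> ('v \<Rightarrow> real) \<Rightarrow> real" where
  "dual_norm N f = (SUP x\<in>{x. N x \<le> 1}. \<bar>f x\<bar>)"

definition dual_ball :: "('v::real_vector \<Rightarrow> real) \<Rightarrow> ('v \<Rightarrow> real) set" where
  "dual_ball N = {f. bounded_wrt N f \<and> dual_norm N f \<le> 1}"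

definition wstar_slice :: "('v::real_vector \<Rightarrow> real) \<Rightarrow> 'v \<Rightarrow> real \<Rightarrow> ('v \<Rightarrow> real) set" where
  "wstar_slice N z \<alpha> = {f \<in> dual_ball N. f z > 1 - \<alpha>}"

definition dual_diam :: "('v::real_vector \<Rightarrow> real) \<Rightarrow> ('v \<Rightarrow> real) set \<Rightarrow> real" where
  "dual_diam N S = (SUP (f, g)\<in>S \<times> S. dual_norm N (\<lambda>x. f x - g x))"

definition wstar_LD2P :: "('v::real_vector \<Rightarrow> real) \<Rightarrow> bool" where
  "wstar_LD2P N \<longleftrightarrow>
     (\<forall>z \<alpha>. N z = 1 \<longrightarrow> \<alpha> > 0 \<longrightarrow> dual_diam N (wstar_slice N z \<alpha>) = 2)"

definition psum_norm :: "ereal \<Rightarrow> ('a::real_normed_vector \<times> 'b::real_normed_vector) \<Rightarrow> real" where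
  "psum_norm p v = (if p = \<infinity> then max (norm (fst v)) (norm (snd v))
     else (norm (fst v) powr real_of_ereal p + norm (snd v) powr real_of_ereal p)
            powr (1 / real_of_ereal p))"

end

theory Submission
  imports Defs
begin

text \<open>Functionals on the p-sum of X and Y act as (u, v) \<mapsto> a f u + b g v. For (a) and (b), the
  weak* slice at z = (x, y) contains a f + b g whenever (a, b) norms (norm x, norm y) for the dual
  l_q norm and f, g almost norm x and y; taking f (and g) from long segments in slices of X* (and Y*)
  gives long segments in the slice at z, tested at (norm x \<cdot> u, norm y \<cdot> v). For p = 1 one may
  take a = b = 1, a fixed norming functional of y and the test vector (u, 0), so only X* needs
  the property. For (c), slice at (x, 0): when p > 1 the norm of (x, t v) is 1 + o(t), so every
  functional in a thin slice is almost zero on Y, and restricting to X a long segment of that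
  slice gives a long segment in the corresponding slice of X*.\<close>

section \<open>Norming functionals\<close>

text \<open>Graphs of norm-dominated linear functionals on subspaces that take the value norm x0 at x0;
  a maximal one (Zorn) is total and is the graph of a norming functional of x0.\<close>

definition dominated_graph :: "'a::real_normed_vector \<Rightarrow> ('a \<times> real) set \<Rightarrow> bool" where
  "dominated_graph x0 G \<longleftrightarrow>
     (0, 0) \<in> G
     \<and> (\<forall>v r w s. (v, r) \<in> G \<longrightarrow> (w, s) \<in> G \<longrightarrow> (v + w, r + s) \<in> G)
     \<and> (\<forall>c v r. (v, r) \<in> G \<longrightarrow> (c *\<^sub>R v, c * r) \<in> G)
     \<and> (\<forall>v r s. (v, r) \<in> G \<longrightarrow> (v, s) \<in> G \<longrightarrow> r = s)
     \<and> (\<forall>v r. (v, r) \<in> G \<longrightarrow> r \<le> norm v)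
     \<and> (x0, norm x0) \<in> G"

lemma dominated_graphD:
  assumes "dominated_graph x0 G"
  shows dominated_graph_zero: "(0, 0) \<in> G"
    and dominated_graph_add: "(v, r) \<in> G \<Longrightarrow> (w, s) \<in> G \<Longrightarrow> (v + w, r + s) \<in> G"
    and dominated_graph_scale: "(v, r) \<in> G \<Longrightarrow> (c *\<^sub>R v, c * r) \<in> G"
    and dominated_graph_unique: "(v, r) \<in> G \<Longrightarrow> (v, s) \<in> G \<Longrightarrow> r = s"
    and dominated_graph_le_norm: "(v, r) \<in> G \<Longrightarrow> r \<le> norm v"
    and dominated_graph_base: "(x0, norm x0) \<in> G"
  using assms unfolding dominated_graph_def by blast+

lemma dominated_graph_line:
  fixes x0 :: "'a::real_normed_vector"
  shows "dominated_graph x0 (range (\<lambda>t. (t *\<^sub>R x0, t * norm x0)))"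
proof -
  have unique: "r = s" if vr: "(v, r) \<in> range (\<lambda>t. (t *\<^sub>R x0, t * norm x0))"
    and vs: "(v, s) \<in> range (\<lambda>t. (t *\<^sub>R x0, t * norm x0))" for v r s
  proof -
    obtain t t' where "v = t *\<^sub>R x0" "r = t * norm x0" "v = t' *\<^sub>R x0" "s = t' * norm x0"
      using vr vs by blast
    then show ?thesis by (cases "x0 = 0") (auto dest: scaleR_cancel_right[THEN iffD1])
  qed
  show ?thesis
    unfolding dominated_graph_def
    by (intro conjI allI impI unique)
      (auto simp: image_iff algebra_simps scaleR_add_left mult_right_mono[OF abs_ge_self norm_ge_zero]
            intro: exI[of _ 1] exI[of _ "_ + _"] exI[of _ "_ * _"])
qed

lemma dominated_graph_Union_chain:
  assumes C: "C \<in> chains {G. dominated_graph x0 G}" and "C \<noteq> {}"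
  shows "dominated_graph x0 (\<Union>C)"
proof -
  have dom: "dominated_graph x0 G" if "G \<in> C" for G
    using that chainsD2[OF C] by blast
  have two: "\<exists>G\<in>C. p \<in> G \<and> q \<in> G" if "p \<in> \<Union>C" "q \<in> \<Union>C" for p q
    using that chainsD[OF C] by blast
  obtain G0 where "G0 \<in> C" using \<open>C \<noteq> {}\<close> by blast
  then have "(0, 0) \<in> \<Union>C" "(x0, norm x0) \<in> \<Union>C"
    using dominated_graph_zero dominated_graph_base dom by blast+
  moreover have "(v + w, r + s) \<in> \<Union>C" if "(v, r) \<in> \<Union>C" "(w, s) \<in> \<Union>C" for v r w s
    using two[OF that] dominated_graph_add dom by blast
  moreover have "r = s" if "(v, r) \<in> \<Union>C" "(v, s) \<in> \<Union>C" for v r s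
    using two[OF that] dominated_graph_unique dom by blast
  moreover have "(c *\<^sub>R v, c * r) \<in> \<Union>C" "r \<le> norm v" if "(v, r) \<in> \<Union>C" for c v r
    using that dominated_graph_scale dominated_graph_le_norm dom by blast+
  ultimately show ?thesis
    unfolding dominated_graph_def by blast
qed

lemma dominated_graph_adjoin_unique:
  assumes M: "dominated_graph x0 M" and y: "y \<notin> fst ` M"
    and vr: "(v1, r1) \<in> M" "(v2, r2) \<in> M" and eq: "v1 + t1 *\<^sub>R y = v2 + t2 *\<^sub>R y"
  shows "t1 = t2" and "r1 = r2"
proof -
  note M_facts = dominated_graphD[OF M]
  show "t1 = t2"
  proof (rule ccontr)
    assume "t1 \<noteq> t2"
    have "(v2 - v1, r2 - r1) \<in> M"
      using M_facts(2)[OF vr(2) M_facts(3)[OF vr(1), of "-1"]] by simp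
    then have "((1 / (t1 - t2)) *\<^sub>R (v2 - v1), (1 / (t1 - t2)) * (r2 - r1)) \<in> M"
      by (rule M_facts(3))
    moreover have "(t1 - t2) *\<^sub>R y = v2 - v1"
      using eq by (simp add: algebra_simps scaleR_diff_left)
    then have "(1 / (t1 - t2)) *\<^sub>R (v2 - v1) = y"
      using \<open>t1 \<noteq> t2\<close> by (metis eq_iff_diff_eq_0 scaleR_scaleR nonzero_divide_eq_eq scaleR_one)
    ultimately show False using y by force
  qed
  then show "r1 = r2"
    using eq vr M_facts(4) by simp
qed

text \<open>After rescaling by 1/|t|, domination at v + t y reduces to the two one-sided bounds on c
  (the cases t = -1 and t = 1).\<close>

lemma dominated_graph_adjoin_le_norm:
  assumes M: "dominated_graph x0 M" and vr: "(v, r) \<in> M"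
    and lower: "\<And>u a. (u, a) \<in> M \<Longrightarrow> a - norm (u - y) \<le> c"
    and upper: "\<And>w b. (w, b) \<in> M \<Longrightarrow> c \<le> norm (w + y) - b"
  shows "r + t * c \<le> norm (v + t *\<^sub>R y)"
proof (cases t "0::real" rule: linorder_cases)
  case less
  have "(1 / -t) * r - norm ((1 / -t) *\<^sub>R v - y) \<le> c"
    using lower[OF dominated_graph_scale[OF M vr]] .
  then have "r - (-t) * norm ((1 / -t) *\<^sub>R v - y) \<le> (-t) * c"
    using less by (simp add: field_simps)
  also have "(-t) * norm ((1 / -t) *\<^sub>R v - y) = norm ((-t) *\<^sub>R ((1 / -t) *\<^sub>R v - y))"
    using less by simp
  also have "(-t) *\<^sub>R ((1 / -t) *\<^sub>R v - y) = v + t *\<^sub>R y"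
    using less by (simp add: scaleR_diff_right)
  finally show ?thesis by simp
next
  case greater
  have "c \<le> norm ((1 / t) *\<^sub>R v + y) - (1 / t) * r"
    using upper[OF dominated_graph_scale[OF M vr]] .
  then have "t * c \<le> t * norm ((1 / t) *\<^sub>R v + y) - r"
    using greater by (simp add: field_simps)
  also have "t * norm ((1 / t) *\<^sub>R v + y) = norm (t *\<^sub>R ((1 / t) *\<^sub>R v + y))"
    using greater by simp
  also have "t *\<^sub>R ((1 / t) *\<^sub>R v + y) = v + t *\<^sub>R y"
    using greater by (simp add: scaleR_add_right)
  finally show ?thesis by simp
qed (use vr dominated_graph_le_norm[OF M] in simp)

lemma dominated_graph_adjoin:
  fixes y :: "'a::real_normed_vector"
  assumes M: "dominated_graph x0 M" and y: "y \<notin> fst ` M"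
    and lower: "\<And>u a. (u, a) \<in> M \<Longrightarrow> a - norm (u - y) \<le> c"
    and upper: "\<And>w b. (w, b) \<in> M \<Longrightarrow> c \<le> norm (w + y) - b"
  shows "dominated_graph x0 {(v + t *\<^sub>R y, r + t * c) | v r t. (v, r) \<in> M}"
    (is "dominated_graph x0 ?M'")
  unfolding dominated_graph_def
proof (intro conjI allI impI)
  note M_facts = dominated_graphD[OF M]
  have M'I: "(v + t *\<^sub>R y, r + t * c) \<in> ?M'" if "(v, r) \<in> M" for v r t
    using that by blast
  show "(0, 0) \<in> ?M'" "(x0, norm x0) \<in> ?M'"
    using M'I[OF M_facts(1), of 0] M'I[OF M_facts(6), of 0] by simp_all
next
  fix v r w s assume "(v, r) \<in> ?M'" "(w, s) \<in> ?M'"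
  then obtain v1 r1 t1 v2 r2 t2 where "(v1, r1) \<in> M" "(v2, r2) \<in> M"
    "v = v1 + t1 *\<^sub>R y" "r = r1 + t1 * c" "w = v2 + t2 *\<^sub>R y" "s = r2 + t2 * c"
    by blast
  then show "(v + w, r + s) \<in> ?M'"
    using dominated_graph_add[OF M, of v1 r1 v2 r2]
    by (intro CollectI exI[of _ "v1 + v2"] exI[of _ "r1 + r2"] exI[of _ "t1 + t2"])
      (simp add: algebra_simps scaleR_add_left)
next
  fix a v r assume "(v, r) \<in> ?M'"
  then obtain v1 r1 t1 where "(v1, r1) \<in> M" "v = v1 + t1 *\<^sub>R y" "r = r1 + t1 * c"
    by blast
  then show "(a *\<^sub>R v, a * r) \<in> ?M'"
    using dominated_graph_scale[OF M, of v1 r1 a]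
    by (intro CollectI exI[of _ "a *\<^sub>R v1"] exI[of _ "a * r1"] exI[of _ "a * t1"])
      (simp add: algebra_simps)
next
  fix v r s assume "(v, r) \<in> ?M'" "(v, s) \<in> ?M'"
  then obtain v1 r1 t1 v2 r2 t2 where "(v1, r1) \<in> M" "(v2, r2) \<in> M"
    "v = v1 + t1 *\<^sub>R y" "r = r1 + t1 * c" "v = v2 + t2 *\<^sub>R y" "s = r2 + t2 * c"
    by blast
  then show "r = s"
    using dominated_graph_adjoin_unique[OF M y, of v1 r1 v2 r2 t1 t2] by simp
next
  fix v r assume "(v, r) \<in> ?M'"
  then show "r \<le> norm v"
    using dominated_graph_adjoin_le_norm[OF M _ lower upper] by blast
qed

lemma dominated_graph_extend:
  fixes y :: "'a::real_normed_vector"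
  assumes M: "dominated_graph x0 M" and y: "y \<notin> fst ` M"
  shows "\<exists>M'. dominated_graph x0 M' \<and> M \<subset> M'"
proof -
  note M_facts = dominated_graphD[OF M]
  have squeeze: "a - norm (u - y) \<le> norm (w + y) - b" if "(u, a) \<in> M" "(w, b) \<in> M" for u a w b
  proof -
    have "a + b \<le> norm ((u - y) + (w + y))"
      using M_facts(5)[OF M_facts(2)[OF that]] by simp
    also have "\<dots> \<le> norm (u - y) + norm (w + y)" by (rule norm_triangle_ineq)
    finally show ?thesis by simp
  qed
  define S where "S = {a - norm (u - y) | u a. (u, a) \<in> M}"
  have "S \<noteq> {}"
    using M_facts(1) unfolding S_def by blast
  have "bdd_above S"
    using squeeze[OF _ M_facts(1)] unfolding S_def bdd_above_def by auto
  have "dominated_graph x0 {(v + t *\<^sub>R y, r + t * Sup S) | v r t. (v, r) \<in> M}"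
    (is "dominated_graph x0 ?M'")
  proof (rule dominated_graph_adjoin[OF M y])
    show "a - norm (u - y) \<le> Sup S" if "(u, a) \<in> M" for u a
      using that \<open>bdd_above S\<close> by (intro cSup_upper) (auto simp: S_def)
    show "Sup S \<le> norm (w + y) - b" if "(w, b) \<in> M" for w b
      using that \<open>S \<noteq> {}\<close> squeeze by (intro cSup_least) (auto simp: S_def)
  qed
  moreover have "M \<subseteq> ?M'"
  proof
    fix p assume "p \<in> M"
    then show "p \<in> ?M'" by (intro CollectI exI[of _ "fst p"] exI[of _ "snd p"] exI[of _ 0]) simp
  qed
  moreover have "(y, Sup S) \<in> ?M'"
    using M_facts(1) by (intro CollectI exI[of _ 0] exI[of _ 0] exI[of _ 1]) simp
  moreover have "(y, Sup S) \<notin> M"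
    using y by force
  ultimately show ?thesis by blast
qed

lemma exists_total_dominated_graph:
  fixes x0 :: "'a::real_normed_vector"
  shows "\<exists>M. dominated_graph x0 M \<and> fst ` M = UNIV"
proof -
  have "\<forall>C\<in>chains {G. dominated_graph x0 G}. \<exists>U\<in>{G. dominated_graph x0 G}. \<forall>G\<in>C. G \<subseteq> U"
  proof
    fix C assume C: "C \<in> chains {G. dominated_graph x0 G}"
    show "\<exists>U\<in>{G. dominated_graph x0 G}. \<forall>G\<in>C. G \<subseteq> U"
    proof (cases "C = {}")
      case True
      then show ?thesis using dominated_graph_line by blast
    next
      case False
      then show ?thesis using dominated_graph_Union_chain[OF C] by blast
    qed
  qed
  from Zorn_Lemma2[OF this] obtain M where M: "dominated_graph x0 M"
    and maximal: "\<And>G. dominated_graph x0 G \<Longrightarrow> M \<subseteq> G \<Longrightarrow> G = M"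
    by blast
  have "v \<in> fst ` M" for v
    using dominated_graph_extend[OF M, of v] maximal by blast
  then have "fst ` M = UNIV" by blast
  then show ?thesis using M by blast
qed

lemma exists_norming_functional:
  fixes x0 :: "'a::real_normed_vector"
  shows "\<exists>f. linear f \<and> (\<forall>v. \<bar>f v\<bar> \<le> norm v) \<and> f x0 = norm x0"
proof -
  obtain M where M: "dominated_graph x0 M" and total: "fst ` M = UNIV"
    using exists_total_dominated_graph by blast
  note M_facts = dominated_graphD[OF M]
  define f where "f v = (THE r. (v, r) \<in> M)" for v
  have graph: "(v, r) \<in> M \<longleftrightarrow> f v = r" for v r
  proof -
    obtain s where s: "(v, s) \<in> M" using total by (metis UNIV_I fst_conv imageE prod.collapse)
    then have "(v, f v) \<in> M"
      unfolding f_def by (rule theI) (use s M_facts(4) in blast)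
    then show ?thesis using M_facts(4) by blast
  qed
  have on_graph: "(v, f v) \<in> M" for v
    using graph by blast
  have "linear f"
  proof (rule linearI)
    show "f (v + w) = f v + f w" for v w
      using M_facts(2)[OF on_graph on_graph] graph by blast
    show "f (c *\<^sub>R v) = c *\<^sub>R f v" for c v
      using M_facts(3)[OF on_graph] graph by simp
  qed
  moreover have "\<bar>f v\<bar> \<le> norm v" for v
    using M_facts(5)[OF on_graph] linear_neg[OF \<open>linear f\<close>, of v]
    by (metis abs_le_iff minus_le_iff norm_minus_cancel)
  moreover have "f x0 = norm x0"
    using M_facts(6) graph by blast
  ultimately show ?thesis by blast
qed

section \<open>The l_p norm of a pair of reals\<close>

definition rnorm2 :: "real \<Rightarrow> real \<Rightarrow> real \<Rightarrow> real" where
  "rnorm2 r a b = (a powr r + b powr r) powr (1 / r)"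

definition pnorm2 :: "ereal \<Rightarrow> real \<Rightarrow> real \<Rightarrow> real" where
  "pnorm2 p a b = (if p = \<infinity> then max a b else rnorm2 (real_of_ereal p) a b)"

lemma psum_norm_pnorm2: "psum_norm p v = pnorm2 p (norm (fst v)) (norm (snd v))"
  unfolding psum_norm_def pnorm2_def rnorm2_def by simp

lemma real_of_ereal_ge_1: "1 \<le> p \<Longrightarrow> p \<noteq> \<infinity> \<Longrightarrow> 1 \<le> real_of_ereal p"
  by (cases p) auto

lemma real_of_ereal_gt_1: "1 < p \<Longrightarrow> p \<noteq> \<infinity> \<Longrightarrow> 1 < real_of_ereal p"
  by (cases p) auto

lemma rnorm2_commute: "rnorm2 r a b = rnorm2 r b a"
  unfolding rnorm2_def by (simp add: add.commute)

lemma rnorm2_nonneg: "0 \<le> rnorm2 r a b"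
  unfolding rnorm2_def by simp

lemma rnorm2_ge_left:
  assumes "1 \<le> r" "0 \<le> a" "0 \<le> b"
  shows "a \<le> rnorm2 r a b"
proof -
  have "a = (a powr r) powr (1 / r)" using assms by (simp add: powr_powr)
  also have "\<dots> \<le> rnorm2 r a b" unfolding rnorm2_def using assms by (intro powr_mono2) auto
  finally show ?thesis .
qed

lemma rnorm2_zero_right: "1 \<le> r \<Longrightarrow> 0 \<le> a \<Longrightarrow> rnorm2 r a 0 = a"
  unfolding rnorm2_def by (simp add: powr_powr)

lemma rnorm2_mono:
  "1 \<le> r \<Longrightarrow> 0 \<le> a \<Longrightarrow> a \<le> a' \<Longrightarrow> 0 \<le> b \<Longrightarrow> b \<le> b' \<Longrightarrow> rnorm2 r a b \<le> rnorm2 r a' b'"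
  unfolding rnorm2_def by (intro powr_mono2 add_mono) auto

lemma rnorm2_homogeneous:
  assumes "1 \<le> r" "0 \<le> c" "0 \<le> a" "0 \<le> b"
  shows "rnorm2 r (c * a) (c * b) = c * rnorm2 r a b"
proof -
  have "(c * a) powr r + (c * b) powr r = c powr r * (a powr r + b powr r)"
    using assms by (simp add: powr_mult algebra_simps)
  then have "rnorm2 r (c * a) (c * b) = (c powr r) powr (1 / r) * rnorm2 r a b"
    unfolding rnorm2_def using assms by (simp add: powr_mult)
  also have "(c powr r) powr (1 / r) = c" using assms by (simp add: powr_powr)
  finally show ?thesis .
qed

lemma rnorm2_powr: "1 \<le> r \<Longrightarrow> rnorm2 r a b powr r = a powr r + b powr r"
  unfolding rnorm2_def by (simp add: powr_powr)

text \<open>The norming functional of (s1, s2) for the l_r norm is (s1^(r-1), s2^(r-1)); that it has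
  dual norm 1 is Young's inequality with the conjugate exponent r/(r-1).\<close>

lemma rnorm2_norming_dual_pair:
  assumes r: "1 < r" and s: "0 \<le> s1" "0 \<le> s2" "rnorm2 r s1 s2 = 1"
  shows "\<exists>a b. 0 \<le> a \<and> 0 \<le> b \<and> a * s1 + b * s2 = 1 \<and>
           (\<forall>c d. 0 \<le> c \<longrightarrow> 0 \<le> d \<longrightarrow> a * c + b * d \<le> rnorm2 r c d)"
proof -
  define q where "q = r / (r - 1)"
  have q: "1 < q" "1 / r + 1 / q = 1" "(r - 1) * q = r"
    using r unfolding q_def by (auto simp: field_simps)
  define a where "a = s1 powr (r - 1)"
  define b where "b = s2 powr (r - 1)"
  have s_sum: "s1 powr r + s2 powr r = 1"
    using rnorm2_powr[of r s1 s2] r s by simp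
  have ab_powr: "a powr q + b powr q = 1"
    using s_sum unfolding a_def b_def by (simp add: powr_powr q(3))
  have "a * s1 = s1 powr r" "b * s2 = s2 powr r"
    using s r unfolding a_def b_def by (auto simp: powr_diff)
  then have "a * s1 + b * s2 = 1" using s_sum by simp
  moreover have "a * c + b * d \<le> rnorm2 r c d" if cd: "0 \<le> c" "0 \<le> d" for c d
  proof (cases "rnorm2 r c d = 0")
    case True
    then have "c = 0" "d = 0"
      using rnorm2_ge_left[of r c d] rnorm2_ge_left[of r d c] r cd by (auto simp: rnorm2_commute)
    then show ?thesis using True by simp
  next
    case False
    define L where "L = rnorm2 r c d"
    have L: "0 < L" using False rnorm2_nonneg[of r c d] unfolding L_def by linarith
    have L_powr: "c powr r + d powr r = L powr r"
      using rnorm2_powr[of r c d] r unfolding L_def by simp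
    have "(c / L) powr r + (d / L) powr r = (c powr r + d powr r) / L powr r"
      using L cd by (simp add: powr_divide add_divide_distrib)
    also have "\<dots> = 1"
      using L unfolding L_powr by simp
    finally have cd_powr: "(c / L) powr r + (d / L) powr r = 1" .
    have "a * (c / L) \<le> a powr q / q + (c / L) powr r / r"
      "b * (d / L) \<le> b powr q / q + (d / L) powr r / r"
      using Youngs_inequality[of q r a "c / L"] Youngs_inequality[of q r b "d / L"] q r L cd
      unfolding a_def b_def by (simp_all add: add.commute)
    then have "a * (c / L) + b * (d / L) \<le> (a powr q + b powr q) / q + ((c / L) powr r + (d / L) powr r) / r"
      by (simp add: add_divide_distrib)
    also have "\<dots> = 1" using ab_powr cd_powr q(2) by simp
    finally have "(a * c + b * d) / L \<le> 1" by (simp add: add_divide_distrib)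
    then show ?thesis using L unfolding L_def by (simp add: divide_le_eq)
  qed
  moreover have "0 \<le> a" "0 \<le> b" unfolding a_def b_def by simp_all
  ultimately show ?thesis by blast
qed

text \<open>This is where r > 1 is needed: for r = 1 the norm of (1, s) is 1 + s.\<close>

lemma rnorm2_flat_at_axis:
  assumes r: "1 < r" and \<eta>: "0 < \<eta>"
  shows "\<exists>t. 0 < t \<and> t \<le> 1 \<and> (\<forall>s. 0 \<le> s \<longrightarrow> s \<le> t \<longrightarrow> rnorm2 r 1 s \<le> 1 + \<eta> * t)"
proof -
  define t where "t = min 1 (\<eta> powr (1 / (r - 1)))"
  have t: "0 < t" "t \<le> 1" unfolding t_def using \<eta> by auto
  have "t powr (r - 1) \<le> (\<eta> powr (1 / (r - 1))) powr (r - 1)"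
    using t r by (intro powr_mono2) (auto simp: t_def)
  also have "\<dots> = \<eta>" using r \<eta> by (simp add: powr_powr)
  finally have t_powr: "t powr (r - 1) \<le> \<eta>" .
  have "rnorm2 r 1 s \<le> 1 + \<eta> * t" if s: "0 \<le> s" "s \<le> t" for s
  proof -
    have "rnorm2 r 1 s = (1 + s powr r) powr (1 / r)"
      unfolding rnorm2_def by simp
    also have "\<dots> \<le> (1 + s powr r) powr 1"
      using r by (intro powr_mono) auto
    also have "\<dots> = 1 + s powr r" by simp
    also have "s powr r \<le> t powr r" using s r by (intro powr_mono2) auto
    also have "t powr r = t * t powr (r - 1)" using t by (simp add: powr_diff)
    also have "\<dots> \<le> t * \<eta>" using t_powr t by (intro mult_left_mono) auto
    finally show ?thesis by (simp add: mult.commute)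
  qed
  then show ?thesis using t by blast
qed

lemma pnorm2_commute: "pnorm2 p a b = pnorm2 p b a"
  unfolding pnorm2_def by (simp add: rnorm2_commute max.commute)

lemma pnorm2_nonneg: "0 \<le> a \<Longrightarrow> 0 \<le> pnorm2 p a b"
  unfolding pnorm2_def by (auto simp: rnorm2_nonneg max_def)

lemma pnorm2_ge_left: "1 \<le> p \<Longrightarrow> 0 \<le> a \<Longrightarrow> 0 \<le> b \<Longrightarrow> a \<le> pnorm2 p a b"
  unfolding pnorm2_def by (auto intro: rnorm2_ge_left real_of_ereal_ge_1)

lemma pnorm2_ge_right: "1 \<le> p \<Longrightarrow> 0 \<le> a \<Longrightarrow> 0 \<le> b \<Longrightarrow> b \<le> pnorm2 p a b"
  using pnorm2_ge_left[of p b a] by (simp add: pnorm2_commute)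

lemma pnorm2_zero_right: "1 \<le> p \<Longrightarrow> 0 \<le> a \<Longrightarrow> pnorm2 p a 0 = a"
  unfolding pnorm2_def by (auto intro: rnorm2_zero_right real_of_ereal_ge_1)

lemma pnorm2_zero_left: "1 \<le> p \<Longrightarrow> 0 \<le> b \<Longrightarrow> pnorm2 p 0 b = b"
  using pnorm2_zero_right[of p b] by (simp add: pnorm2_commute)

lemma pnorm2_mono:
  "1 \<le> p \<Longrightarrow> 0 \<le> a \<Longrightarrow> a \<le> a' \<Longrightarrow> 0 \<le> b \<Longrightarrow> b \<le> b' \<Longrightarrow> pnorm2 p a b \<le> pnorm2 p a' b'"
  unfolding pnorm2_def by (auto intro: rnorm2_mono real_of_ereal_ge_1)

lemma pnorm2_homogeneous:
  "1 \<le> p \<Longrightarrow> 0 \<le> c \<Longrightarrow> 0 \<le> a \<Longrightarrow> 0 \<le> b \<Longrightarrow> pnorm2 p (c * a) (c * b) = c * pnorm2 p a b"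
  unfolding pnorm2_def by (auto simp: rnorm2_homogeneous real_of_ereal_ge_1 max_mult_distrib_left)

lemma pnorm2_one: "0 \<le> a \<Longrightarrow> 0 \<le> b \<Longrightarrow> pnorm2 1 a b = a + b"
  unfolding pnorm2_def rnorm2_def by simp

lemma pnorm2_norming_dual_pair:
  assumes p: "1 < p" and s: "0 \<le> s1" "0 \<le> s2" "pnorm2 p s1 s2 = 1"
  shows "\<exists>a b. 0 \<le> a \<and> 0 \<le> b \<and> a * s1 + b * s2 = 1 \<and>
           (\<forall>c d. 0 \<le> c \<longrightarrow> 0 \<le> d \<longrightarrow> a * c + b * d \<le> pnorm2 p c d)"
proof (cases "p = \<infinity>")
  case True
  then have "s1 = 1 \<or> s2 = 1" using s by (auto simp: pnorm2_def max_def split: if_splits)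
  then show ?thesis
  proof
    assume "s1 = 1" then show ?thesis
      using True by (intro exI[of _ 1] exI[of _ 0]) (auto simp: pnorm2_def)
  next
    assume "s2 = 1" then show ?thesis
      using True by (intro exI[of _ 0] exI[of _ 1]) (auto simp: pnorm2_def)
  qed
next
  case False
  then show ?thesis
    using rnorm2_norming_dual_pair[OF real_of_ereal_gt_1[OF p False] s(1,2)] s(3)
    by (simp add: pnorm2_def)
qed

lemma pnorm2_flat_at_axis:
  assumes p: "1 < p" and \<eta>: "0 < \<eta>"
  shows "\<exists>t. 0 < t \<and> t \<le> 1 \<and> (\<forall>s. 0 \<le> s \<longrightarrow> s \<le> t \<longrightarrow> pnorm2 p 1 s \<le> 1 + \<eta> * t)"
proof (cases "p = \<infinity>")
  case True
  then show ?thesis using \<eta> by (intro exI[of _ 1]) (auto simp: pnorm2_def)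
next
  case False
  then show ?thesis
    using rnorm2_flat_at_axis[OF real_of_ereal_gt_1[OF p False] \<eta>] by (simp add: pnorm2_def)
qed

section \<open>Dual balls and their diameters\<close>

text \<open>The p-sum norm is not the norm of a type, so facts about dual balls are stated for any
  absolutely homogeneous gauge N.\<close>

definition abs_homogeneous :: "('v::real_vector \<Rightarrow> real) \<Rightarrow> bool" where
  "abs_homogeneous N \<longleftrightarrow> (\<forall>c v. N (c *\<^sub>R v) = \<bar>c\<bar> * N v) \<and> (\<forall>v. 0 \<le> N v)"

lemma abs_homogeneousD:
  assumes "abs_homogeneous N"
  shows abs_homogeneous_scale: "N (c *\<^sub>R v) = \<bar>c\<bar> * N v"
    and abs_homogeneous_nonneg: "0 \<le> N v"
  using assms unfolding abs_homogeneous_def by blast+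

lemma abs_homogeneous_zero: "abs_homogeneous N \<Longrightarrow> N 0 = 0"
  using abs_homogeneous_scale[of N 0 0] by simp

lemma abs_homogeneous_minus: "abs_homogeneous N \<Longrightarrow> N (- v) = N v"
  using abs_homogeneous_scale[of N "-1" v] by simp

lemma abs_homogeneous_norm: "abs_homogeneous norm"
  unfolding abs_homogeneous_def by simp

lemma abs_homogeneous_psum_norm:
  "1 \<le> p \<Longrightarrow> abs_homogeneous (psum_norm p :: 'a::real_normed_vector \<times> 'b::real_normed_vector \<Rightarrow> real)"
  unfolding abs_homogeneous_def psum_norm_pnorm2 by (auto simp: pnorm2_homogeneous pnorm2_nonneg)

lemma linear_scale_real: "linear f \<Longrightarrow> f (c *\<^sub>R v) = c * (f v :: real)"
  using linear_scale[of f c v] by simp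

lemma abs_le_dual_norm:
  assumes "\<And>x. N x \<le> 1 \<Longrightarrow> \<bar>h x\<bar> \<le> B" "N x \<le> 1"
  shows "\<bar>h x\<bar> \<le> dual_norm N h"
  unfolding dual_norm_def using assms by (intro cSUP_upper) (auto simp: bdd_above_def)

lemma dual_norm_le:
  assumes "abs_homogeneous N" "\<And>x. N x \<le> 1 \<Longrightarrow> \<bar>h x\<bar> \<le> c"
  shows "dual_norm N h \<le> c"
  unfolding dual_norm_def using assms abs_homogeneous_zero[OF assms(1)]
  by (intro cSUP_least) (auto intro!: exI[of _ 0])

lemma bounded_wrt_abs_le:
  assumes N: "abs_homogeneous N" and f: "bounded_wrt N f"
  shows "\<bar>f v\<bar> \<le> dual_norm N f * N v"
proof -
  obtain K where K: "\<And>x. \<bar>f x\<bar> \<le> K * N x" and "linear f"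
    using f unfolding bounded_wrt_def by blast
  have "\<bar>f x\<bar> \<le> \<bar>K\<bar>" if "N x \<le> 1" for x
  proof -
    have "K * N x \<le> \<bar>K\<bar> * 1"
      using mult_mono[OF abs_ge_self that] abs_homogeneous_nonneg[OF N, of x] by simp
    then show ?thesis using K[of x] by simp
  qed
  then have unit: "\<bar>f x\<bar> \<le> dual_norm N f" if "N x \<le> 1" for x
    using abs_le_dual_norm that by blast
  show ?thesis
  proof (cases "N v = 0")
    case True
    then show ?thesis using K[of v] by simp
  next
    case False
    then have pos: "0 < N v" using abs_homogeneous_nonneg[OF N, of v] by linarith
    have "\<bar>f ((1 / N v) *\<^sub>R v)\<bar> \<le> dual_norm N f"
      using pos by (intro unit) (simp add: abs_homogeneous_scale[OF N])
    then show ?thesis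
      using pos by (simp add: linear_scale_real[OF \<open>linear f\<close>] abs_mult field_simps)
  qed
qed

lemma dual_ball_linear: "f \<in> dual_ball N \<Longrightarrow> linear f"
  unfolding dual_ball_def bounded_wrt_def by blast

lemma dual_ball_abs_le:
  assumes N: "abs_homogeneous N" and f: "f \<in> dual_ball N"
  shows "\<bar>f v\<bar> \<le> N v"
proof -
  have "\<bar>f v\<bar> \<le> dual_norm N f * N v"
    using bounded_wrt_abs_le[OF N] f unfolding dual_ball_def by blast
  also have "\<dots> \<le> N v"
    using f mult_right_mono[OF _ abs_homogeneous_nonneg[OF N, of v], of "dual_norm N f" 1]
    unfolding dual_ball_def by simp
  finally show ?thesis .
qed

lemma dual_ballI:
  assumes "abs_homogeneous N" "linear f" "\<And>v. \<bar>f v\<bar> \<le> N v"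
  shows "f \<in> dual_ball N"
  unfolding dual_ball_def bounded_wrt_def
  using assms by (auto intro!: exI[of _ 1] dual_norm_le intro: order.trans)

lemma dual_ball_abs_diff_le_2:
  assumes "abs_homogeneous N" "f \<in> dual_ball N" "g \<in> dual_ball N" "N x \<le> 1"
  shows "\<bar>f x - g x\<bar> \<le> 2"
  using dual_ball_abs_le[OF assms(1,2), of x] dual_ball_abs_le[OF assms(1,3), of x] assms(4)
  by linarith

lemma dual_norm_diff_gt_iff:
  assumes N: "abs_homogeneous N" and f: "f \<in> dual_ball N" and g: "g \<in> dual_ball N"
  shows "c < dual_norm N (\<lambda>x. f x - g x) \<longleftrightarrow> (\<exists>x. N x \<le> 1 \<and> c < f x - g x)"
proof
  assume "\<exists>x. N x \<le> 1 \<and> c < f x - g x"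
  then obtain x where "N x \<le> 1" "c < f x - g x" by blast
  moreover have "\<bar>f x - g x\<bar> \<le> dual_norm N (\<lambda>x. f x - g x)"
    using dual_ball_abs_diff_le_2[OF N f g] \<open>N x \<le> 1\<close> by (rule abs_le_dual_norm)
  ultimately show "c < dual_norm N (\<lambda>x. f x - g x)" by linarith
next
  assume "c < dual_norm N (\<lambda>x. f x - g x)"
  moreover have "{x. N x \<le> 1} \<noteq> {}"
    using abs_homogeneous_zero[OF N] by (metis empty_iff mem_Collect_eq zero_le_one)
  moreover have "bdd_above ((\<lambda>x. \<bar>f x - g x\<bar>) ` {x. N x \<le> 1})"
    using dual_ball_abs_diff_le_2[OF N f g] by (intro bdd_aboveI2) auto
  ultimately obtain x where x: "N x \<le> 1" "c < \<bar>f x - g x\<bar>"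
    unfolding dual_norm_def by (auto simp: less_cSUP_iff)
  have "f (- x) - g (- x) = - (f x - g x)"
    using dual_ball_linear[OF f] dual_ball_linear[OF g] by (simp add: linear_neg)
  then show "\<exists>x. N x \<le> 1 \<and> c < f x - g x"
    using x abs_homogeneous_minus[OF N, of x]
    by (cases "f x - g x \<ge> 0") (auto intro: exI[of _ x] exI[of _ "-x"])
qed

lemma dual_diam_eq_2_iff:
  assumes N: "abs_homogeneous N" and S: "S \<subseteq> dual_ball N" "S \<noteq> {}"
  shows "dual_diam N S = 2 \<longleftrightarrow>
    (\<forall>\<epsilon>>0. \<exists>f\<in>S. \<exists>g\<in>S. \<exists>x. N x \<le> 1 \<and> f x - g x > 2 - \<epsilon>)"
proof -
  define D where "D f g = dual_norm N (\<lambda>x. f x - g x)" for f g :: "'a \<Rightarrow> real"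
  have D_le_2: "D f g \<le> 2" if "f \<in> S" "g \<in> S" for f g
    unfolding D_def using that S dual_ball_abs_diff_le_2[OF N]
    by (intro dual_norm_le[OF N]) blast
  have ne: "S \<times> S \<noteq> {}" using S by blast
  have bdd: "bdd_above ((\<lambda>(f, g). D f g) ` (S \<times> S))"
    using D_le_2 by (auto simp: bdd_above_def)
  have diam: "dual_diam N S = (SUP (f, g)\<in>S \<times> S. D f g)"
    unfolding dual_diam_def D_def by simp
  have "dual_diam N S \<le> 2"
    unfolding diam using ne D_le_2 by (intro cSUP_least) auto
  then have "dual_diam N S = 2 \<longleftrightarrow> (\<forall>\<epsilon>>0. 2 - \<epsilon> < dual_diam N S)"
    by (cases "dual_diam N S < 2") (auto intro: exI[of _ "2 - dual_diam N S"])
  also have "\<dots> \<longleftrightarrow> (\<forall>\<epsilon>>0. \<exists>f\<in>S. \<exists>g\<in>S. 2 - \<epsilon> < D f g)"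
    unfolding diam by (simp add: less_cSUP_iff[OF ne bdd])
  also have "\<dots> \<longleftrightarrow> (\<forall>\<epsilon>>0. \<exists>f\<in>S. \<exists>g\<in>S. \<exists>x. N x \<le> 1 \<and> f x - g x > 2 - \<epsilon>)"
    unfolding D_def using dual_norm_diff_gt_iff[OF N] S by blast
  finally show ?thesis .
qed

lemma wstar_LD2PI:
  assumes N: "abs_homogeneous N"
    and long: "\<And>z \<alpha> \<epsilon>. N z = 1 \<Longrightarrow> 0 < \<alpha> \<Longrightarrow> 0 < \<epsilon> \<Longrightarrow>
      \<exists>f\<in>wstar_slice N z \<alpha>. \<exists>g\<in>wstar_slice N z \<alpha>. \<exists>w. N w \<le> 1 \<and> f w - g w > 2 - \<epsilon>"
  shows "wstar_LD2P N"
  unfolding wstar_LD2P_def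
proof (intro allI impI)
  fix z \<alpha> assume "N z = 1" "0 < (\<alpha>::real)"
  moreover have "wstar_slice N z \<alpha> \<subseteq> dual_ball N"
    unfolding wstar_slice_def by blast
  moreover have "wstar_slice N z \<alpha> \<noteq> {}"
    using long[OF \<open>N z = 1\<close> \<open>0 < \<alpha>\<close> zero_less_one] by blast
  ultimately show "dual_diam N (wstar_slice N z \<alpha>) = 2"
    using long by (simp add: dual_diam_eq_2_iff[OF N])
qed

lemma wstar_LD2PD:
  assumes "wstar_LD2P N" "abs_homogeneous N" "N z = 1" "0 < \<alpha>" "wstar_slice N z \<alpha> \<noteq> {}" "0 < \<epsilon>"
  shows "\<exists>f\<in>wstar_slice N z \<alpha>. \<exists>g\<in>wstar_slice N z \<alpha>. \<exists>w. N w \<le> 1 \<and> f w - g w > 2 - \<epsilon>"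
proof -
  have "wstar_slice N z \<alpha> \<subseteq> dual_ball N"
    unfolding wstar_slice_def by blast
  then show ?thesis
    using assms dual_diam_eq_2_iff[of N "wstar_slice N z \<alpha>"] unfolding wstar_LD2P_def by blast
qed

lemma wstar_slice_norm_nonempty:
  fixes z :: "'a::real_normed_vector"
  assumes "norm z = 1" "0 < \<alpha>"
  shows "wstar_slice norm z \<alpha> \<noteq> {}"
proof -
  obtain f where f: "linear f" "\<And>v. \<bar>f v\<bar> \<le> norm v" "f z = norm z"
    using exists_norming_functional[of z] by blast
  then have "f \<in> dual_ball norm"
    by (intro dual_ballI[OF abs_homogeneous_norm])
  then have "f \<in> wstar_slice norm z \<alpha>"
    using assms f(3) unfolding wstar_slice_def by simp
  then show ?thesis by blast
qed

lemma exists_unit_vector_direction: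
  fixes x :: "'a::real_normed_vector"
  assumes "\<exists>e::'a. e \<noteq> 0"
  shows "\<exists>z. norm z = 1 \<and> x = norm x *\<^sub>R z"
proof (cases "x = 0")
  case True
  obtain e :: 'a where "e \<noteq> 0" using assms by blast
  then show ?thesis using True by (intro exI[of _ "(1 / norm e) *\<^sub>R e"]) simp
next
  case False
  then show ?thesis by (intro exI[of _ "(1 / norm x) *\<^sub>R x"]) simp
qed

text \<open>Nontriviality of the space is needed only for x = 0, which determines no slice of its own.\<close>

lemma wstar_LD2P_near_norming_pair:
  fixes x :: "'a::real_normed_vector"
  assumes LD: "wstar_LD2P (norm :: 'a \<Rightarrow> real)" and nontrivial: "\<exists>e::'a. e \<noteq> 0"
    and \<delta>: "0 < \<delta>" and \<epsilon>: "0 < \<epsilon>"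
  shows "\<exists>f1\<in>dual_ball norm. \<exists>f2\<in>dual_ball norm. \<exists>u. f1 x > norm x - \<delta> \<and> f2 x > norm x - \<delta>
    \<and> norm u \<le> 1 \<and> f1 u - f2 u > 2 - \<epsilon>"
proof -
  obtain z where z: "norm z = 1" "x = norm x *\<^sub>R z"
    using exists_unit_vector_direction[OF nontrivial] by blast
  define \<beta> where "\<beta> = \<delta> / (norm x + 1)"
  have "0 < norm x + 1"
    by (simp add: add_nonneg_pos)
  then have \<beta>: "0 < \<beta>" "norm x * \<beta> < \<delta>"
    using \<delta> unfolding \<beta>_def by (simp_all add: field_simps)
  obtain f1 f2 u where f: "f1 \<in> wstar_slice norm z \<beta>" "f2 \<in> wstar_slice norm z \<beta>"
    and u: "norm u \<le> 1" "f1 u - f2 u > 2 - \<epsilon>"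
    using wstar_LD2PD[OF LD abs_homogeneous_norm z(1) \<beta>(1) wstar_slice_norm_nonempty[OF z(1) \<beta>(1)] \<epsilon>]
    by blast
  have "f x > norm x - \<delta>" if "f \<in> wstar_slice norm z \<beta>" for f
  proof -
    have "linear f"
      using that unfolding wstar_slice_def by (blast dest: dual_ball_linear)
    have "f x = f (norm x *\<^sub>R z)"
      using z(2) by (rule arg_cong)
    also have "\<dots> = norm x * f z"
      by (rule linear_scale_real[OF \<open>linear f\<close>])
    also have "\<dots> \<ge> norm x * (1 - \<beta>)"
      using that unfolding wstar_slice_def by (intro mult_left_mono) auto
    finally show ?thesis using \<beta>(2) by (simp add: algebra_simps)
  qed
  then show ?thesis
    using f u unfolding wstar_slice_def by blast
qed

section \<open>p-sums\<close>

lemma norm_fst_le_psum_norm: "1 \<le> p \<Longrightarrow> norm (fst v) \<le> psum_norm p v"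
  unfolding psum_norm_pnorm2 by (rule pnorm2_ge_left) auto

lemma norm_snd_le_psum_norm: "1 \<le> p \<Longrightarrow> norm (snd v) \<le> psum_norm p v"
  unfolding psum_norm_pnorm2 by (rule pnorm2_ge_right) auto

lemma psum_norm_Pair_zero: "1 \<le> p \<Longrightarrow> psum_norm p (x, 0) = norm x"
  unfolding psum_norm_pnorm2 by (simp add: pnorm2_zero_right)

lemma linear_Pair_split: "linear h \<Longrightarrow> h (u, v) = h (u, 0) + h (0, v)"
  using linear_add[of h "(u, 0)" "(0, v)"] by simp

lemma linear_restrict_fst: "linear h \<Longrightarrow> linear (\<lambda>u. h (u, 0))"
  by (rule linearI) (simp_all flip: linear_add linear_scale)

lemma linear_restrict_snd: "linear h \<Longrightarrow> linear (\<lambda>v. h (0, v))"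
  by (rule linearI) (simp_all flip: linear_add linear_scale)

lemma weighted_pair_in_dual_ball:
  fixes f :: "'a::real_normed_vector \<Rightarrow> real" and g :: "'b::real_normed_vector \<Rightarrow> real"
  assumes p: "1 \<le> p" and f: "f \<in> dual_ball norm" and g: "g \<in> dual_ball norm"
    and ab: "0 \<le> a" "0 \<le> b" "\<And>c d. 0 \<le> c \<Longrightarrow> 0 \<le> d \<Longrightarrow> a * c + b * d \<le> pnorm2 p c d"
  shows "(\<lambda>w. a * f (fst w) + b * g (snd w)) \<in> dual_ball (psum_norm p)"
proof (rule dual_ballI[OF abs_homogeneous_psum_norm[OF p]])
  show "linear (\<lambda>w. a * f (fst w) + b * g (snd w))"
    using dual_ball_linear[OF f] dual_ball_linear[OF g]
    by (intro linearI) (auto simp: linear_add linear_scale_real algebra_simps)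
  fix w :: "'a \<times> 'b"
  have "\<bar>a * f (fst w) + b * g (snd w)\<bar> \<le> a * norm (fst w) + b * norm (snd w)"
    using dual_ball_abs_le[OF abs_homogeneous_norm f, of "fst w"]
      dual_ball_abs_le[OF abs_homogeneous_norm g, of "snd w"] ab(1,2)
    by (auto simp: abs_mult intro!: order.trans[OF abs_triangle_ineq] add_mono mult_left_mono)
  also have "\<dots> \<le> psum_norm p w"
    unfolding psum_norm_pnorm2 by (rule ab(3)) auto
  finally show "\<bar>a * f (fst w) + b * g (snd w)\<bar> \<le> psum_norm p w" .
qed

lemma weighted_pair_in_wstar_slice:
  fixes f :: "'a::real_normed_vector \<Rightarrow> real" and g :: "'b::real_normed_vector \<Rightarrow> real"
  assumes p: "1 \<le> p" and \<alpha>: "0 < \<alpha>"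
    and ab: "0 \<le> a" "0 \<le> b" "a * norm x + b * norm y = 1"
      "\<And>c d. 0 \<le> c \<Longrightarrow> 0 \<le> d \<Longrightarrow> a * c + b * d \<le> pnorm2 p c d"
    and f: "f \<in> dual_ball norm" "f x > norm x - \<alpha> / 4"
    and g: "g \<in> dual_ball norm" "g y > norm y - \<alpha> / 4"
  shows "(\<lambda>w. a * f (fst w) + b * g (snd w)) \<in> wstar_slice (psum_norm p) (x, y) \<alpha>"
proof -
  have "a \<le> 1" "b \<le> 1"
    using ab(4)[of 1 0] ab(4)[of 0 1] p by (simp_all add: pnorm2_zero_right pnorm2_zero_left)
  then have "(a + b) * (\<alpha> / 4) \<le> 2 * (\<alpha> / 4)"
    using \<alpha> by (intro mult_right_mono) auto
  moreover have "a * f x \<ge> a * (norm x - \<alpha> / 4)" "b * g y \<ge> b * (norm y - \<alpha> / 4)"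
    using f(2) g(2) ab(1,2) by (auto intro: mult_left_mono)
  ultimately have "a * f x + b * g y > 1 - \<alpha>"
    using ab(3) \<alpha> by (simp add: algebra_simps)
  then show ?thesis
    using weighted_pair_in_dual_ball[OF p f(1) g(1) ab(1,2,4)] unfolding wstar_slice_def by simp
qed

lemma wstar_LD2P_psum_one:
  assumes LD: "wstar_LD2P (norm :: 'a::real_normed_vector \<Rightarrow> real)"
    and nontrivial: "\<exists>e::'a. e \<noteq> 0"
  shows "wstar_LD2P (psum_norm 1 :: 'a \<times> 'b::real_normed_vector \<Rightarrow> real)"
proof (rule wstar_LD2PI[OF abs_homogeneous_psum_norm[OF order.refl]])
  fix z :: "'a \<times> 'b" and \<alpha> \<epsilon> :: real
  assume z: "psum_norm 1 z = 1" and \<alpha>: "0 < \<alpha>" and \<epsilon>: "0 < \<epsilon>"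
  obtain x y where xy: "z = (x, y)" by (cases z)
  have norms: "1 * norm x + 1 * norm y = 1"
    using z unfolding xy by (simp add: psum_norm_pnorm2 pnorm2_one)
  have weights: "1 * c + 1 * d \<le> pnorm2 1 c d" if "0 \<le> c" "0 \<le> d" for c d
    using that by (simp add: pnorm2_one)
  obtain g where "linear g" "\<And>v. \<bar>g v\<bar> \<le> norm v" and g_y: "g y = norm y"
    using exists_norming_functional[of y] by blast
  then have g: "g \<in> dual_ball norm"
    by (intro dual_ballI[OF abs_homogeneous_norm])
  have g_near: "g y > norm y - \<alpha> / 4"
    using g_y \<alpha> by simp
  obtain f1 f2 u where f: "f1 \<in> dual_ball norm" "f2 \<in> dual_ball norm"
    "f1 x > norm x - \<alpha> / 4" "f2 x > norm x - \<alpha> / 4" and u: "norm u \<le> 1" "f1 u - f2 u > 2 - \<epsilon>"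
    using wstar_LD2P_near_norming_pair[OF LD nontrivial _ \<epsilon>, of "\<alpha> / 4" x] \<alpha> by auto
  let ?H = "\<lambda>f w. 1 * f (fst w) + 1 * g (snd w)"
  have "?H f \<in> wstar_slice (psum_norm 1) z \<alpha>"
    if "f \<in> dual_ball norm" "f x > norm x - \<alpha> / 4" for f
    unfolding xy
    by (rule weighted_pair_in_wstar_slice[OF order.refl \<alpha> zero_le_one zero_le_one norms weights that g g_near])
  then have "?H f1 \<in> wstar_slice (psum_norm 1) z \<alpha>" "?H f2 \<in> wstar_slice (psum_norm 1) z \<alpha>"
    using f by blast+
  moreover have "psum_norm 1 (u, 0) \<le> 1"
    using u by (simp add: psum_norm_Pair_zero)
  moreover have "?H f1 (u, 0) - ?H f2 (u, 0) > 2 - \<epsilon>"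
    using linear_0[OF \<open>linear g\<close>] u by simp
  ultimately show "\<exists>f\<in>wstar_slice (psum_norm 1) z \<alpha>. \<exists>h\<in>wstar_slice (psum_norm 1) z \<alpha>.
      \<exists>w. psum_norm 1 w \<le> 1 \<and> f w - h w > 2 - \<epsilon>"
    by (intro bexI[where x = "?H f1"] bexI[where x = "?H f2"] exI[where x = "(u, 0)"] conjI)
qed

lemma wstar_LD2P_psum:
  assumes LDX: "wstar_LD2P (norm :: 'a::real_normed_vector \<Rightarrow> real)" and ntX: "\<exists>e::'a. e \<noteq> 0"
    and LDY: "wstar_LD2P (norm :: 'b::real_normed_vector \<Rightarrow> real)" and ntY: "\<exists>e::'b. e \<noteq> 0"
    and p: "1 < p"
  shows "wstar_LD2P (psum_norm p :: 'a \<times> 'b \<Rightarrow> real)"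
proof (rule wstar_LD2PI[OF abs_homogeneous_psum_norm])
  show p1: "1 \<le> p" using p by simp
  fix z :: "'a \<times> 'b" and \<alpha> \<epsilon> :: real
  assume z: "psum_norm p z = 1" and \<alpha>: "0 < \<alpha>" and \<epsilon>: "0 < \<epsilon>"
  obtain x y where xy: "z = (x, y)" by (cases z)
  have unit: "pnorm2 p (norm x) (norm y) = 1"
    using z unfolding xy psum_norm_pnorm2 by simp
  obtain a b where ab: "0 \<le> a" "0 \<le> b" "a * norm x + b * norm y = 1"
    "\<And>c d. 0 \<le> c \<Longrightarrow> 0 \<le> d \<Longrightarrow> a * c + b * d \<le> pnorm2 p c d"
    using pnorm2_norming_dual_pair[OF p _ _ unit] by auto
  obtain f1 f2 u where f: "f1 \<in> dual_ball norm" "f2 \<in> dual_ball norm"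
    "f1 x > norm x - \<alpha> / 4" "f2 x > norm x - \<alpha> / 4" and u: "norm u \<le> 1" "f1 u - f2 u > 2 - \<epsilon> / 2"
    using wstar_LD2P_near_norming_pair[OF LDX ntX, of "\<alpha> / 4" "\<epsilon> / 2" x] \<alpha> \<epsilon> by auto
  obtain g1 g2 v where g: "g1 \<in> dual_ball norm" "g2 \<in> dual_ball norm"
    "g1 y > norm y - \<alpha> / 4" "g2 y > norm y - \<alpha> / 4" and v: "norm v \<le> 1" "g1 v - g2 v > 2 - \<epsilon> / 2"
    using wstar_LD2P_near_norming_pair[OF LDY ntY, of "\<alpha> / 4" "\<epsilon> / 2" y] \<alpha> \<epsilon> by auto
  define H where "H f g w = a * f (fst w) + b * g (snd w)"
    for f :: "'a \<Rightarrow> real" and g :: "'b \<Rightarrow> real" and w :: "'a \<times> 'b"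
  have "H f g \<in> wstar_slice (psum_norm p) z \<alpha>"
    if "f \<in> dual_ball norm" "f x > norm x - \<alpha> / 4" "g \<in> dual_ball norm" "g y > norm y - \<alpha> / 4" for f g
    unfolding xy H_def by (rule weighted_pair_in_wstar_slice[OF p1 \<alpha> ab that])
  then have in_slice: "H f1 g1 \<in> wstar_slice (psum_norm p) z \<alpha>" "H f2 g2 \<in> wstar_slice (psum_norm p) z \<alpha>"
    using f g by blast+
  define w where "w = (norm x *\<^sub>R u, norm y *\<^sub>R v)"
  have "psum_norm p w = pnorm2 p (norm x * norm u) (norm y * norm v)"
    unfolding w_def psum_norm_pnorm2 by simp
  also have "\<dots> \<le> pnorm2 p (norm x) (norm y)"
    by (rule pnorm2_mono[OF p1]) (simp_all add: mult_left_le u(1) v(1))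
  finally have w: "psum_norm p w \<le> 1"
    using unit by simp
  have "H f1 g1 w - H f2 g2 w = (a * norm x) * (f1 u - f2 u) + (b * norm y) * (g1 v - g2 v)"
    using dual_ball_linear[OF f(1)] dual_ball_linear[OF f(2)] dual_ball_linear[OF g(1)] dual_ball_linear[OF g(2)]
    unfolding H_def w_def by (simp add: linear_scale_real algebra_simps)
  also have "\<dots> \<ge> (a * norm x) * (2 - \<epsilon> / 2) + (b * norm y) * (2 - \<epsilon> / 2)"
    using u v ab(1,2) by (intro add_mono mult_left_mono) auto
  also have "(a * norm x) * (2 - \<epsilon> / 2) + (b * norm y) * (2 - \<epsilon> / 2) = 2 - \<epsilon> / 2"
    by (subst distrib_right[symmetric]) (simp add: ab(3))
  finally have "H f1 g1 w - H f2 g2 w > 2 - \<epsilon>"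
    using \<epsilon> by linarith
  then show "\<exists>f\<in>wstar_slice (psum_norm p) z \<alpha>. \<exists>h\<in>wstar_slice (psum_norm p) z \<alpha>.
      \<exists>w. psum_norm p w \<le> 1 \<and> f w - h w > 2 - \<epsilon>"
    using in_slice w by blast
qed

lemma restrict_fst_in_dual_ball:
  assumes p: "1 \<le> p" and h: "h \<in> dual_ball (psum_norm p :: 'a::real_normed_vector \<times> 'b::real_normed_vector \<Rightarrow> real)"
  shows "(\<lambda>u. h (u, 0)) \<in> dual_ball norm"
proof (rule dual_ballI[OF abs_homogeneous_norm linear_restrict_fst[OF dual_ball_linear[OF h]]])
  show "\<bar>h (u, 0)\<bar> \<le> norm u" for u
    using dual_ball_abs_le[OF abs_homogeneous_psum_norm[OF p] h, of "(u, 0)"] p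
    by (simp add: psum_norm_Pair_zero)
qed

text \<open>Since (x, t v) has norm 1 + o(t), a functional of norm at most 1 that almost norms (x, 0)
  can only be small on the second summand.\<close>

lemma psum_dual_ball_small_on_snd:
  assumes p: "1 < p" and \<eta>: "0 < \<eta>"
  obtains \<delta> where "0 < \<delta>"
    and "\<And>h x v. h \<in> dual_ball (psum_norm p :: 'a::real_normed_vector \<times> 'b::real_normed_vector \<Rightarrow> real)
      \<Longrightarrow> norm x = 1 \<Longrightarrow> h (x, 0) > 1 - \<delta> \<Longrightarrow> norm v \<le> 1 \<Longrightarrow> \<bar>h (0, v)\<bar> < 2 * \<eta>"
proof -
  obtain t where t: "0 < t" "t \<le> 1" and flat: "\<And>s. 0 \<le> s \<Longrightarrow> s \<le> t \<Longrightarrow> pnorm2 p 1 s \<le> 1 + \<eta> * t"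
    using pnorm2_flat_at_axis[OF p \<eta>] by blast
  have p1: "1 \<le> p" using p by simp
  have bound: "h (0, v) < 2 * \<eta>"
    if h: "h \<in> dual_ball (psum_norm p :: 'a \<times> 'b \<Rightarrow> real)" and x: "norm x = 1"
      and hx: "h (x, 0) > 1 - \<eta> * t" and v: "norm v \<le> 1" for h x v
  proof -
    have "linear h" using dual_ball_linear[OF h] .
    have "h (x, 0) + t * h (0, v) = h (x, t *\<^sub>R v)"
      using linear_Pair_split[OF \<open>linear h\<close>, of x "t *\<^sub>R v"]
        linear_scale_real[OF linear_restrict_snd[OF \<open>linear h\<close>], of t v] by simp
    also have "\<dots> \<le> psum_norm p (x, t *\<^sub>R v)"
      using dual_ball_abs_le[OF abs_homogeneous_psum_norm[OF p1] h] abs_ge_self order.trans by blast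
    also have "\<dots> = pnorm2 p 1 (t * norm v)"
      unfolding psum_norm_pnorm2 using x t by simp
    also have "\<dots> \<le> 1 + \<eta> * t"
      using t v by (intro flat) (auto intro: mult_left_le)
    finally have "t * h (0, v) < 2 * (\<eta> * t)"
      using hx by linarith
    then show ?thesis using t by simp
  qed
  show ?thesis
  proof (rule that)
    show "0 < \<eta> * t" using \<eta> t by simp
    fix h :: "'a \<times> 'b \<Rightarrow> real" and x :: 'a and v :: 'b
    assume h: "h \<in> dual_ball (psum_norm p)" and "norm x = 1" "h (x, 0) > 1 - \<eta> * t" "norm v \<le> 1"
    then have "h (0, v) < 2 * \<eta>" "h (0, - v) < 2 * \<eta>"
      using bound by auto
    moreover have "h (0, - v) = - h (0, v)"
      using linear_neg[OF linear_restrict_snd[OF dual_ball_linear[OF h]]] by simp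
    ultimately show "\<bar>h (0, v)\<bar> < 2 * \<eta>" by simp
  qed
qed

lemma wstar_LD2P_of_psum:
  assumes LD: "wstar_LD2P (psum_norm p :: 'a::real_normed_vector \<times> 'b::real_normed_vector \<Rightarrow> real)"
    and p: "1 < p"
  shows "wstar_LD2P (norm :: 'a \<Rightarrow> real)"
proof (rule wstar_LD2PI[OF abs_homogeneous_norm])
  fix x :: 'a and \<alpha> \<epsilon> :: real
  assume x: "norm x = 1" and \<alpha>: "0 < \<alpha>" and \<epsilon>: "0 < \<epsilon>"
  have p1: "1 \<le> p" using p by simp
  let ?N = "psum_norm p :: 'a \<times> 'b \<Rightarrow> real"
  obtain \<delta>0 where "0 < \<delta>0" and small: "\<And>h v. h \<in> dual_ball ?N \<Longrightarrow> h (x, 0) > 1 - \<delta>0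
      \<Longrightarrow> norm v \<le> 1 \<Longrightarrow> \<bar>h (0, v)\<bar> < 2 * (\<epsilon> / 5)"
    using psum_dual_ball_small_on_snd[OF p, of "\<epsilon> / 5"] x \<epsilon> by (metis zero_less_divide_iff zero_less_numeral)
  define \<delta> where "\<delta> = min \<alpha> \<delta>0"
  have \<delta>: "0 < \<delta>" using \<alpha> \<open>0 < \<delta>0\<close> unfolding \<delta>_def by simp
  have unit: "?N (x, 0) = 1"
    using x p1 by (simp add: psum_norm_Pair_zero)
  obtain f where f: "f \<in> wstar_slice norm x \<delta>"
    using wstar_slice_norm_nonempty[OF x \<delta>] by blast
  have "(\<lambda>_. 0) \<in> dual_ball (norm :: 'b \<Rightarrow> real)"
    by (rule dual_ballI[OF abs_homogeneous_norm]) (simp_all add: linear_zero)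
  then have "(\<lambda>w. 1 * f (fst w) + 0 * (0::real)) \<in> dual_ball ?N"
    using weighted_pair_in_dual_ball[OF p1, of f "\<lambda>_. 0" 1 0] f pnorm2_ge_left[OF p1]
    unfolding wstar_slice_def by simp
  then have "(\<lambda>w. 1 * f (fst w) + 0 * (0::real)) \<in> wstar_slice ?N (x, 0) \<delta>"
    using f unfolding wstar_slice_def by simp
  then have "wstar_slice ?N (x, 0) \<delta> \<noteq> {}" by blast
  then obtain h1 h2 w where h: "h1 \<in> wstar_slice ?N (x, 0) \<delta>" "h2 \<in> wstar_slice ?N (x, 0) \<delta>"
    and w: "?N w \<le> 1" "h1 w - h2 w > 2 - \<epsilon> / 5"
    using wstar_LD2PD[OF LD abs_homogeneous_psum_norm[OF p1] unit \<delta>, of "\<epsilon> / 5"] \<epsilon> by auto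
  have restrict: "(\<lambda>u. h (u, 0)) \<in> wstar_slice norm x \<alpha>" if "h \<in> wstar_slice ?N (x, 0) \<delta>" for h
    using restrict_fst_in_dual_ball[OF p1] that unfolding wstar_slice_def \<delta>_def by auto
  have small_snd: "\<bar>h (0, v)\<bar> < 2 * (\<epsilon> / 5)" if "h \<in> wstar_slice ?N (x, 0) \<delta>" "norm v \<le> 1" for h v
    using small that unfolding wstar_slice_def \<delta>_def by auto
  obtain w1 w2 where w12: "w = (w1, w2)" by (cases w)
  have "norm w1 \<le> 1" "norm w2 \<le> 1"
    using w(1) norm_fst_le_psum_norm[OF p1, of w] norm_snd_le_psum_norm[OF p1, of w] unfolding w12 by simp_all
  have "h1 w = h1 (w1, 0) + h1 (0, w2)" "h2 w = h2 (w1, 0) + h2 (0, w2)"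
    unfolding w12 using h by (auto intro!: linear_Pair_split dual_ball_linear simp: wstar_slice_def)
  then have "h1 (w1, 0) - h2 (w1, 0) > 2 - \<epsilon>"
    using w(2) small_snd[OF h(1) \<open>norm w2 \<le> 1\<close>] small_snd[OF h(2) \<open>norm w2 \<le> 1\<close>]
    by (simp add: abs_less_iff)
  then show "\<exists>f\<in>wstar_slice norm x \<alpha>. \<exists>g\<in>wstar_slice norm x \<alpha>. \<exists>u. norm u \<le> 1 \<and> f u - g u > 2 - \<epsilon>"
    using restrict[OF h(1)] restrict[OF h(2)] \<open>norm w1 \<le> 1\<close>
    by (intro bexI[where x = "\<lambda>u. h1 (u, 0)"] bexI[where x = "\<lambda>u. h2 (u, 0)"] exI[where x = w1] conjI)
qed

theorem corollary4p4:
  fixes X :: "'a::banach itself" and Y :: "'b::banach itself"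
  assumes "\<exists>x::'a. x \<noteq> 0" and "\<exists>y::'b. y \<noteq> 0"
  shows "(wstar_LD2P (norm :: 'a \<Rightarrow> real) \<longrightarrow>
            wstar_LD2P (psum_norm 1 :: 'a \<times> 'b \<Rightarrow> real))
       \<and> (\<forall>p::ereal. 1 < p \<and> p \<le> \<infinity> \<longrightarrow>
            wstar_LD2P (norm :: 'a \<Rightarrow> real) \<longrightarrow> wstar_LD2P (norm :: 'b \<Rightarrow> real) \<longrightarrow>
            wstar_LD2P (psum_norm p :: 'a \<times> 'b \<Rightarrow> real))
       \<and> (\<forall>p::ereal. 1 < p \<and> p \<le> \<infinity> \<longrightarrow>
            wstar_LD2P (psum_norm p :: 'a \<times> 'b \<Rightarrow> real) \<longrightarrow>
            wstar_LD2P (norm :: 'a \<Rightarrow> real))"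
  using wstar_LD2P_psum_one[OF _ assms(1)] wstar_LD2P_psum[OF _ assms(1) _ assms(2)]
    wstar_LD2P_of_psum
  by blast

end
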